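(* Let $T_1$ and $T_2$ be two $L_1$-periodic tilings of type $(\gamma_1,\gamma_2,\gamma_3)$ with $\gamma_1,\gamma_2,\gamma_3>0$. Then $T_1$ and $T_2$ are connected by a sequence of flips.
   Context: Let $u^\top=(1,0)$, $v^\top=-(\tfrac12,\tfrac{\sqrt3}{2})$, $w=-(u+v)$, $L_0=\langle u,v\rangle$, and $L_1\le L_0$ a full-rank sublattice. An $L_1$-periodic tiling (periodic lozenge tiling of the plane) is an $L_1$-invariant map $T\colon L_0\to\{U,V,W\}$ such that for every $x$ exactly one of $T(x)=W$, $T(x+u)=V$, $T(x-v)=U$ holds; $T(x)$ removes one arrow of the upward triangle $x\to x+u\to x-v\to x$ ($U$: $x\to x+u$; $V$: $x-v\to x$; $W$: $x+u\to x-v$), and the remaining arrows are said to be in $T$. The type of $T$ counts the values $U,V,W$ over $L_0/L_1$. A source (resp. sink) of $T$ is a point where no arrow in $T$ ends (resp. starts), i.e. three lozenges of three different types meet there. A flip at a source or sink $z$ replaces the three lozenges meeting at each point of $z+L_1$ by the opposite configuration (turning sources into sinks and vice versa); it preserves the type. *)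

theory Defs
  imports Main
begin

text \<open>Points of L0 = <u,v> are written in the basis (u,v): the pair (a,b) stands for a*u + b*v.
  Hence u = (1,0), v = (0,1), w = -(u+v) = (-1,-1).\<close>

type_synonym pt = "int \<times> int"

definition padd :: "pt \<Rightarrow> pt \<Rightarrow> pt" where
  "padd x y = (fst x + fst y, snd x + snd y)"

definition psub :: "pt \<Rightarrow> pt \<Rightarrow> pt" where
  "psub x y = (fst x - fst y, snd x - snd y)"

definition uvec :: pt where "uvec = (1, 0)"
definition vvec :: pt where "vvec = (0, 1)"

definition full_rank_sublattice :: "pt set \<Rightarrow> bool" where
  "full_rank_sublattice L \<longleftrightarrow> (\<exists>p q :: pt.
      fst p * snd q - snd p * fst q \<noteq> 0 \<and>
      L = {(m * fst p + n * fst q, m * snd p + n * snd q) | m n :: int. True})"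

datatype loz = U | V | W

definition periodic_tiling :: "pt set \<Rightarrow> (pt \<Rightarrow> loz) \<Rightarrow> bool" where
  "periodic_tiling L T \<longleftrightarrow>
     (\<forall>x. \<forall>l\<in>L. T (padd x l) = T x) \<and>
     (\<forall>x. (T x = W \<and> T (padd x uvec) \<noteq> V \<and> T (psub x vvec) \<noteq> U) \<or>
          (T x \<noteq> W \<and> T (padd x uvec) = V \<and> T (psub x vvec) \<noteq> U) \<or>
          (T x \<noteq> W \<and> T (padd x uvec) \<noteq> V \<and> T (psub x vvec) = U))"

definition cosets :: "pt set \<Rightarrow> pt set set" where
  "cosets L = UNIV // {(x, y). psub x y \<in> L}"

definition type_count :: "pt set \<Rightarrow> (pt \<Rightarrow> loz) \<Rightarrow> loz \<Rightarrow> nat" where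
  "type_count L T t = card {C \<in> cosets L. \<exists>x\<in>C. T x = t}"

definition tiling_type :: "pt set \<Rightarrow> (pt \<Rightarrow> loz) \<Rightarrow> nat \<times> nat \<times> nat" where
  "tiling_type L T = (type_count L T U, type_count L T V, type_count L T W)"

text \<open>Every arrow of the triangular lattice is an edge of exactly one upward
  triangle x -> x+u -> x-v -> x; T x removes one of them:
  U removes x -> x+u, V removes x-v -> x, W removes x+u -> x-v.\<close>
definition arrow_in :: "(pt \<Rightarrow> loz) \<Rightarrow> pt \<Rightarrow> pt \<Rightarrow> bool" where
  "arrow_in T a b \<longleftrightarrow> (\<exists>x.
      (a = x \<and> b = padd x uvec \<and> T x \<noteq> U) \<or>
      (a = psub x vvec \<and> b = x \<and> T x \<noteq> V) \<or>
      (a = padd x uvec \<and> b = psub x vvec \<and> T x \<noteq> W))"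

definition is_source :: "(pt \<Rightarrow> loz) \<Rightarrow> pt \<Rightarrow> bool" where
  "is_source T z \<longleftrightarrow> (\<forall>a. \<not> arrow_in T a z)"

definition is_sink :: "(pt \<Rightarrow> loz) \<Rightarrow> pt \<Rightarrow> bool" where
  "is_sink T z \<longleftrightarrow> (\<forall>b. \<not> arrow_in T z b)"

text \<open>The three upward triangles containing z are those at z, z-u and z+v.  At a source
  they carry V, U, W respectively; at a sink they carry U, W, V.\<close>
definition set_conf :: "pt set \<Rightarrow> (pt \<Rightarrow> loz) \<Rightarrow> pt \<Rightarrow> loz \<Rightarrow> loz \<Rightarrow> loz \<Rightarrow> pt \<Rightarrow> loz" where
  "set_conf L T z a b c = (\<lambda>x.
      if psub x z \<in> L then a
      else if psub x (psub z uvec) \<in> L then b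
      else if psub x (padd z vvec) \<in> L then c
      else T x)"

definition flip :: "pt set \<Rightarrow> (pt \<Rightarrow> loz) \<Rightarrow> (pt \<Rightarrow> loz) \<Rightarrow> bool" where
  "flip L T T' \<longleftrightarrow> (\<exists>z.
      (is_source T z \<and> T' = set_conf L T z U W V) \<or>
      (is_sink T z \<and> T' = set_conf L T z V U W))"

definition flip_connected :: "pt set \<Rightarrow> (pt \<Rightarrow> loz) \<Rightarrow> (pt \<Rightarrow> loz) \<Rightarrow> bool" where
  "flip_connected L T1 T2 \<longleftrightarrow> (flip L)\<^sup>*\<^sup>* T1 T2"

end

theory Submission
  imports Defs "HOL-Library.Product_Plus" "HOL-Library.Product_Lexorder"
begin

text \<open>A lozenge tiling T has an integer height function h, rising by 1 along every arrow of T
  and dropping by 2 along every removed arrow. Averaging over L0/L1 shows that for an L1-periodic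
  tiling of type (g1, g2, g3), with N = g1 + g2 + g3 = |L0/L1|,
  N (h (x + l) - h x) = l_u (N - 3 g1) + l_v (N - 3 g2) for l in L1. So two tilings of the same
  type have heights h, h' with L1-periodic difference, which may be normalised to be divisible
  by 3. If h > h' somewhere, let z maximise h - h' and, among such points, the tilted height
  N h x - (x_u (N - 3 g1) + x_v (N - 3 g2)). Along each of the three arrows that could leave z the
  tilted height strictly increases because every g_i > 0, so no arrow of T leaves z: z is a sink.
  The flip at z lowers h by 3 on z + L1 and decreases the sum of |h - h'| over L0/L1; the case
  h' > h is symmetric, and h = h' forces equal tilings.\<close>

lemma padd_eq [simp]: "padd x y = x + y"
  by (simp add: padd_def plus_prod_def)

lemma psub_eq [simp]: "psub x y = x - y"
  by (simp add: psub_def minus_prod_def)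

lemma int_shift_invariant_const:
  fixes f :: "int \<Rightarrow> 'a"
  assumes "\<And>b. f (b + 1) = f b"
  shows "f b = f 0"
proof (induction b rule: int_induct[where k = 0])
  case (step2 i)
  then show ?case using assms[of "i - 1"] by simp
qed (use assms in simp_all)

lemma translation_invariant_const:
  fixes f :: "pt \<Rightarrow> 'a"
  assumes "\<And>x. f (x + uvec) = f x" and "\<And>x. f (x + vvec) = f x"
  shows "f x = f 0"
proof -
  obtain a b where x: "x = (a, b)" by fastforce
  have "f (a' + 1, b') = f (a', b')" "f (a', b' + 1) = f (a', b')" for a' b'
    using assms[of "(a', b')"] by (simp_all add: uvec_def vvec_def)
  then have "f (a, b) = f (0, b)" and "f (0, b) = f (0, 0)"
    using int_shift_invariant_const[of "\<lambda>a. f (a, b)"] int_shift_invariant_const[of "\<lambda>b. f (0, b)"]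
    by blast+
  then show ?thesis by (simp add: x zero_prod_def)
qed

definition signed_sum :: "(int \<Rightarrow> int) \<Rightarrow> int \<Rightarrow> int" where
  "signed_sum f a = (\<Sum>i\<in>{0..<a}. f i) - (\<Sum>i\<in>{a..<0}. f i)"

lemma signed_sum_0 [simp]: "signed_sum f 0 = 0"
  by (simp add: signed_sum_def)

lemma signed_sum_succ: "signed_sum f (a + 1) = signed_sum f a + f a"
proof (cases "a \<ge> 0")
  case True
  then have "{0..<a + 1} = insert a {0..<a}" "{a + 1..<0} = {}" "{a..<0} = {}" by auto
  then show ?thesis by (simp add: signed_sum_def)
next
  case False
  then have "{0..<a + 1} = {}" "{0..<a} = {}" "{a..<0} = insert a {a + 1..<0}" by auto
  then show ?thesis by (simp add: signed_sum_def)
qed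

section \<open>Height functions\<close>

definition jump :: "(pt \<Rightarrow> loz) \<Rightarrow> loz \<Rightarrow> pt \<Rightarrow> int" where
  "jump T t x = (if T x = t then -2 else 1)"

text \<open>h rises by 1 along each arrow of T and drops by 2 along each removed arrow; the arrow
  x - v \<rightarrow> x is removed iff T x = V.\<close>

definition height :: "(pt \<Rightarrow> loz) \<Rightarrow> (pt \<Rightarrow> int) \<Rightarrow> bool" where
  "height T h \<longleftrightarrow>
     (\<forall>x. h (x + uvec) = h x + jump T U x) \<and> (\<forall>x. h (x + vvec) = h x + jump T V (x + vvec))"

text \<open>The local condition of \<^const>\<open>periodic_tiling\<close>: exactly one edge of the downward
  triangle x - v, x + u - v, x + u is removed. Since every jump is 1 or -2, this says that the
  jumps around it sum to 0.\<close>

definition lozenge_tiling :: "(pt \<Rightarrow> loz) \<Rightarrow> bool" where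
  "lozenge_tiling T \<longleftrightarrow> (\<forall>x. jump T W x + jump T V (x + uvec) + jump T U (x - vvec) = 0)"

lemma jump_sum_up_triangle: "jump T U x + jump T V x + jump T W x = 0"
  by (cases "T x") (simp_all add: jump_def)

lemma jump_le_1: "jump T t x \<le> 1"
  by (simp add: jump_def)

lemma height_uvec: "height T h \<Longrightarrow> h (x + uvec) = h x + jump T U x"
  unfolding height_def by blast

lemma height_vvec: "height T h \<Longrightarrow> h (x + vvec) = h x + jump T V (x + vvec)"
  unfolding height_def by blast

lemma height_W_edge: "height T h \<Longrightarrow> h (x - vvec) = h (x + uvec) + jump T W x"
  using height_uvec[of T h x] height_vvec[of T h "x - vvec"] jump_sum_up_triangle[of T x] by simp

lemma height_imp_lozenge_tiling:
  assumes h: "height T h"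
  shows "lozenge_tiling T"
  unfolding lozenge_tiling_def
proof
  fix x
  have "h (x + uvec - vvec) = h (x - vvec) + jump T U (x - vvec)"
    using height_uvec[OF h, of "x - vvec"] by (simp add: algebra_simps)
  moreover have "h (x + uvec) = h (x + uvec - vvec) + jump T V (x + uvec)"
    using height_vvec[OF h, of "x + uvec - vvec"] by simp
  moreover have "h (x - vvec) = h (x + uvec) + jump T W x"
    by (rule height_W_edge[OF h])
  ultimately show "jump T W x + jump T V (x + uvec) + jump T U (x - vvec) = 0"
    by simp
qed

lemma lozenge_tiling_parallelogram:
  assumes "lozenge_tiling T"
  shows "jump T U x + jump T V (x + uvec + vvec) = jump T V (x + vvec) + jump T U (x + vvec)"
  using assms[unfolded lozenge_tiling_def, rule_format, of "x + vvec"]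
    jump_sum_up_triangle[of T "x + vvec"]
  by (simp add: algebra_simps)

lemma lozenge_tiling_has_height:
  assumes "lozenge_tiling T"
  obtains h where "height T h" and "h 0 = 0"
proof -
  define h where "h x = signed_sum (\<lambda>a. jump T U (a, 0)) (fst x)
    + signed_sum (\<lambda>b. jump T V (fst x, b + 1)) (snd x)" for x
  have h_vvec: "h ((a, b) + vvec) = h (a, b) + jump T V ((a, b) + vvec)" for a b
    by (simp add: h_def vvec_def signed_sum_succ)
  have h_uvec: "h ((a, b) + uvec) = h (a, b) + jump T U (a, b)" for a b
  proof -
    \<comment> \<open>The defect of the u-step at (a, b); the parallelogram relation makes it independent of b.\<close>
    define E where "E b = signed_sum (\<lambda>j. jump T V (a + 1, j + 1)) b
      - signed_sum (\<lambda>j. jump T V (a, j + 1)) b - jump T U (a, b)" for b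
    have "E (b + 1) = E b" for b
      using lozenge_tiling_parallelogram[OF assms, of "(a, b)"]
      by (simp add: E_def signed_sum_succ uvec_def vvec_def)
    then have "E b = E 0" by (rule int_shift_invariant_const)
    then show ?thesis by (simp add: E_def h_def uvec_def signed_sum_succ)
  qed
  have "height T h"
    unfolding height_def using h_uvec h_vvec by (metis prod.collapse)
  moreover have "h 0 = 0" by (simp add: h_def)
  ultimately show ?thesis by (rule that)
qed

lemma height_determines_tiling:
  assumes "height T h" and "height T' h"
  shows "T = T'"
proof
  fix x
  have "jump T U x = jump T' U x"
    using height_uvec[OF assms(1), of x] height_uvec[OF assms(2), of x] by simp
  moreover have "jump T V x = jump T' V x"
    using height_vvec[OF assms(1), of "x - vvec"] height_vvec[OF assms(2), of "x - vvec"] by simp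
  ultimately show "T x = T' x"
    by (cases "T x"; cases "T' x") (simp_all add: jump_def)
qed

lemma height_diff_mod_3:
  assumes "height T h" and "height T' h'"
  shows "(h x - h' x) mod 3 = (h 0 - h' 0) mod 3"
proof (rule translation_invariant_const)
  have jump_mod_3: "(a + jump T t y - (b + jump T' t' y')) mod 3 = (a - b) mod 3" for a b t t' y y'
    unfolding jump_def by (simp split: if_split; presburger)
  show "(h (y + uvec) - h' (y + uvec)) mod 3 = (h y - h' y) mod 3" for y
    unfolding height_uvec[OF assms(1)] height_uvec[OF assms(2)] by (rule jump_mod_3)
  show "(h (y + vvec) - h' (y + vvec)) mod 3 = (h y - h' y) mod 3" for y
    unfolding height_vvec[OF assms(1)] height_vvec[OF assms(2)] by (rule jump_mod_3)
qed

lemma sink_configuration_is_sink: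
  "T z = U \<Longrightarrow> T (z - uvec) = W \<Longrightarrow> T (z + vvec) = V \<Longrightarrow> is_sink T z"
  unfolding is_sink_def arrow_in_def by (auto simp: algebra_simps)

lemma source_configuration_is_source:
  "T z = V \<Longrightarrow> T (z - uvec) = U \<Longrightarrow> T (z + vvec) = W \<Longrightarrow> is_source T z"
  unfolding is_source_def arrow_in_def by (auto simp: algebra_simps)

section \<open>Periodic functions and cosets\<close>

definition lattice_periodic :: "pt set \<Rightarrow> (pt \<Rightarrow> 'a) \<Rightarrow> bool" where
  "lattice_periodic L f \<longleftrightarrow> (\<forall>x. \<forall>l\<in>L. f (x + l) = f x)"

lemma lattice_periodic_eq: "lattice_periodic L f \<Longrightarrow> x - y \<in> L \<Longrightarrow> f x = f y"
  unfolding lattice_periodic_def by (metis add.commute diff_add_cancel)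

lemma periodic_tiling_iff: "periodic_tiling L T \<longleftrightarrow> lattice_periodic L T \<and> lozenge_tiling T"
  unfolding periodic_tiling_def lattice_periodic_def lozenge_tiling_def jump_def by auto

lemma height_increment_const:
  assumes per: "lattice_periodic L T" and h: "height T h" and l: "l \<in> L"
  shows "h (y + l) - h y = h (x + l) - h x"
proof -
  have jump_per: "jump T t (z + l) = jump T t z" for t z
    using lattice_periodic_eq[OF per, of "z + l" z] l by (simp add: jump_def)
  have "h (z + uvec + l) - h (z + uvec) = h (z + l) - h z" for z
  proof -
    have "h (z + uvec + l) = h (z + l) + jump T U (z + l)"
      using height_uvec[OF h, of "z + l"] by (simp add: add_ac)
    then show ?thesis using height_uvec[OF h, of z] jump_per[of U z] by simp
  qed
  moreover have "h (z + vvec + l) - h (z + vvec) = h (z + l) - h z" for z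
  proof -
    have "h (z + vvec + l) = h (z + l) + jump T V (z + vvec + l)"
      using height_vvec[OF h, of "z + l"] by (simp add: add_ac)
    then show ?thesis using height_vvec[OF h, of z] jump_per[of V "z + vvec"] by simp
  qed
  ultimately show ?thesis
    using translation_invariant_const[of "\<lambda>y. h (y + l) - h y"] by metis
qed

locale sublattice =
  fixes L :: "pt set"
  assumes full_rank: "full_rank_sublattice L"
begin

lemma sublattice_basis:
  obtains p q :: pt where "fst p * snd q - snd p * fst q \<noteq> 0"
    and "\<And>l. l \<in> L \<longleftrightarrow> (\<exists>m n. l = (m * fst p + n * fst q, m * snd p + n * snd q))"
  using full_rank unfolding full_rank_sublattice_def by blast

lemma sublattice_closed:
  shows zero_in_sublattice: "0 \<in> L"
    and add_in_sublattice: "a \<in> L \<Longrightarrow> b \<in> L \<Longrightarrow> a + b \<in> L"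
    and uminus_in_sublattice: "a \<in> L \<Longrightarrow> - a \<in> L"
proof -
  obtain p q :: pt
    where L: "\<And>l. l \<in> L \<longleftrightarrow> (\<exists>m n. l = (m * fst p + n * fst q, m * snd p + n * snd q))"
    using sublattice_basis by blast
  show "0 \<in> L" unfolding L by (rule exI[of _ 0], rule exI[of _ 0]) (simp add: zero_prod_def)
  show "a + b \<in> L" if ab: "a \<in> L" "b \<in> L"
  proof -
    obtain m n m' n' where "a = (m * fst p + n * fst q, m * snd p + n * snd q)"
      and "b = (m' * fst p + n' * fst q, m' * snd p + n' * snd q)"
      using ab unfolding L by blast
    then show ?thesis unfolding L
      by (intro exI[of _ "m + m'"] exI[of _ "n + n'"]) (simp add: algebra_simps)
  qed
  show "- a \<in> L" if a: "a \<in> L"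
  proof -
    obtain m n where "a = (m * fst p + n * fst q, m * snd p + n * snd q)"
      using a unfolding L by blast
    then show ?thesis unfolding L
      by (intro exI[of _ "- m"] exI[of _ "- n"]) (simp add: algebra_simps)
  qed
qed

lemma scaled_grid_in_sublattice: "\<exists>D > 0. \<forall>k j. (D * k, D * j) \<in> L"
proof -
  obtain p q :: pt where det: "fst p * snd q - snd p * fst q \<noteq> 0"
    and L: "\<And>l. l \<in> L \<longleftrightarrow> (\<exists>m n. l = (m * fst p + n * fst q, m * snd p + n * snd q))"
    using sublattice_basis by blast
  define D where "D = fst p * snd q - snd p * fst q"
  \<comment> \<open>Cramer's rule, with the adjugate of the matrix (p q) giving the coefficients.\<close>
  have grid: "(D * k, D * j) \<in> L" for k j
    unfolding L D_def
    by (intro exI[of _ "k * snd q - j * fst q"] exI[of _ "j * fst p - k * snd p"])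
      (simp add: algebra_simps)
  moreover have "(- D * k, - D * j) \<in> L" for k j
    using grid[of "- k" "- j"] by simp
  ultimately show ?thesis
    using det unfolding D_def[symmetric] by (cases "D > 0") (auto intro: exI[of _ "- D"])
qed

lemma diff_in_sublattice: "a \<in> L \<Longrightarrow> b \<in> L \<Longrightarrow> a - b \<in> L"
  using add_in_sublattice[of a "- b"] uminus_in_sublattice[of b] by simp

lemma diff_in_sublattice_commute: "a - b \<in> L \<longleftrightarrow> b - a \<in> L"
  using uminus_in_sublattice[of "a - b"] uminus_in_sublattice[of "b - a"] by auto

lemma diff_in_sublattice_trans: "x - y \<in> L \<Longrightarrow> y - z \<in> L \<Longrightarrow> x - z \<in> L"
  using add_in_sublattice[of "x - y" "y - z"] by simp

definition coset :: "pt \<Rightarrow> pt set" where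
  "coset x = {y. x - y \<in> L}"

definition rep :: "pt set \<Rightarrow> pt" where
  "rep C = (SOME x. x \<in> C)"

lemma cosets_eq_range_coset: "cosets L = range coset"
  unfolding cosets_def quotient_def coset_def by auto

lemma coset_eq_iff: "coset x = coset y \<longleftrightarrow> x - y \<in> L"
  unfolding coset_def set_eq_iff mem_Collect_eq
  by (metis diff_in_sublattice_commute diff_in_sublattice_trans diff_self zero_in_sublattice)

lemma rep_coset: "x - rep (coset x) \<in> L"
proof -
  have "x \<in> coset x" by (simp add: coset_def zero_in_sublattice)
  then have "rep (coset x) \<in> coset x" unfolding rep_def by (rule someI)
  then show ?thesis by (simp add: coset_def)
qed

lemma coset_rep: "C \<in> cosets L \<Longrightarrow> coset (rep C) = C"
  using rep_coset coset_eq_iff diff_in_sublattice_commute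
  unfolding cosets_eq_range_coset by blast

lemma rep_in_coset: "C \<in> cosets L \<Longrightarrow> rep C \<in> C"
  using rep_coset unfolding cosets_eq_range_coset coset_def by blast

lemma lattice_periodic_on_coset:
  assumes f: "lattice_periodic L f" and C: "C \<in> cosets L" and x: "x \<in> C"
  shows "f x = f (rep C)"
proof -
  obtain y where y: "C = coset y" using C unfolding cosets_eq_range_coset by blast
  have "y - x \<in> L" and "y - rep C \<in> L"
    using x rep_in_coset[OF C] unfolding y coset_def by simp_all
  then have "x - rep C \<in> L"
    using diff_in_sublattice[of "y - rep C" "y - x"] by simp
  then show ?thesis by (rule lattice_periodic_eq[OF f])
qed

lemma lattice_periodic_rep_coset: "lattice_periodic L f \<Longrightarrow> f (rep (coset x)) = f x"
  using lattice_periodic_eq rep_coset diff_in_sublattice_commute by metis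

lemma finite_cosets: "finite (cosets L)"
proof -
  obtain D where "D > 0" and grid: "\<And>k j. (D * k, D * j) \<in> L"
    using scaled_grid_in_sublattice by blast
  have "coset x \<in> coset ` ({0..<D} \<times> {0..<D})" for x
  proof -
    obtain a c where x: "x = (a, c)" by fastforce
    have "x - (a mod D, c mod D) = (D * (a div D), D * (c div D))"
      by (simp add: x minus_mod_eq_mult_div)
    then have "coset x = coset (a mod D, c mod D)"
      unfolding coset_eq_iff by (simp add: grid)
    then show ?thesis using \<open>D > 0\<close> by simp
  qed
  then have "cosets L \<subseteq> coset ` ({0..<D} \<times> {0..<D})"
    unfolding cosets_eq_range_coset by blast
  then show ?thesis by (rule finite_subset) simp
qed

lemma lattice_periodic_attains_max:
  fixes f :: "pt \<Rightarrow> 'a::linorder"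
  assumes "lattice_periodic L f"
  obtains z where "\<And>x. f x \<le> f z"
proof -
  have range_eq: "range f = (\<lambda>C. f (rep C)) ` cosets L"
    unfolding cosets_eq_range_coset image_image lattice_periodic_rep_coset[OF assms] by simp
  then have "Max (range f) \<in> range f"
    using finite_cosets by (intro Max_in) auto
  moreover have "f x \<le> Max (range f)" for x
    using finite_cosets range_eq by (intro Max_ge) auto
  ultimately show ?thesis using that by (metis rangeE)
qed

lemma sum_cosets_translate:
  assumes "lattice_periodic L f"
  shows "(\<Sum>C\<in>cosets L. f (rep C + y)) = (\<Sum>C\<in>cosets L. f (rep C))"
proof (rule sum.reindex_bij_witness[where j = "\<lambda>C. coset (rep C + y)"
                                       and i = "\<lambda>C. coset (rep C - y)"])
  fix C assume C: "C \<in> cosets L"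
  have "rep (coset (rep C + y)) - y - rep C \<in> L"
    using rep_coset[of "rep C + y"] diff_in_sublattice_commute by (simp add: algebra_simps)
  then show "coset (rep (coset (rep C + y)) - y) = C"
    using coset_rep[OF C] coset_eq_iff by metis
  show "f (rep (coset (rep C + y))) = f (rep C + y)"
    by (rule lattice_periodic_rep_coset[OF assms])
next
  fix C assume C: "C \<in> cosets L"
  have "rep (coset (rep C - y)) + y - rep C \<in> L"
    using rep_coset[of "rep C - y"] diff_in_sublattice_commute by (simp add: algebra_simps)
  then show "coset (rep (coset (rep C - y)) + y) = C"
    using coset_rep[OF C] coset_eq_iff by metis
qed (simp_all add: cosets_eq_range_coset)

section \<open>The slope of a periodic tiling\<close>

lemma type_count_eq_card:
  assumes "lattice_periodic L T"
  shows "type_count L T t = card {C \<in> cosets L. T (rep C) = t}"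
proof -
  have "(\<exists>x\<in>C. T x = t) \<longleftrightarrow> T (rep C) = t" if "C \<in> cosets L" for C
    using lattice_periodic_on_coset[OF assms that] rep_in_coset[OF that] by metis
  then have "{C \<in> cosets L. \<exists>x\<in>C. T x = t} = {C \<in> cosets L. T (rep C) = t}"
    by auto
  then show ?thesis unfolding type_count_def by simp
qed

lemma sum_cosets_jump:
  assumes "lattice_periodic L T"
  shows "(\<Sum>C\<in>cosets L. jump T t (rep C + y)) = int (card (cosets L)) - 3 * int (type_count L T t)"
proof -
  have "lattice_periodic L (jump T t)"
    using assms unfolding lattice_periodic_def jump_def by simp
  then have "(\<Sum>C\<in>cosets L. jump T t (rep C + y)) = (\<Sum>C\<in>cosets L. jump T t (rep C))"
    by (rule sum_cosets_translate)
  also have "\<dots> = (\<Sum>C\<in>cosets L. 1 - 3 * of_bool (T (rep C) = t))"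
    by (rule sum.cong) (simp_all add: jump_def)
  also have "\<dots> = int (card (cosets L)) - 3 * int (card (cosets L \<inter> {C. T (rep C) = t}))"
    using finite_cosets by (simp add: sum_subtractf sum_distrib_left[symmetric])
  finally show ?thesis
    unfolding type_count_eq_card[OF assms] by (simp add: Collect_conj_eq Int_commute)
qed

lemma card_cosets_eq_type_counts:
  assumes "lattice_periodic L T"
  shows "card (cosets L) = type_count L T U + type_count L T V + type_count L T W"
proof -
  have "(\<Sum>C\<in>cosets L. jump T U (rep C + 0) + jump T V (rep C + 0) + jump T W (rep C + 0)) = 0"
    by (simp add: jump_sum_up_triangle)
  then show ?thesis
    unfolding sum.distrib sum_cosets_jump[OF assms] by simp
qed

lemma height_slope:
  assumes "periodic_tiling L T" and h: "height T h" and l: "l \<in> L"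
  defines "N \<equiv> int (card (cosets L))"
  shows "N * (h (x + l) - h x)
    = fst l * (N - 3 * int (type_count L T U)) + snd l * (N - 3 * int (type_count L T V))"
proof -
  define Su where "Su = N - 3 * int (type_count L T U)"
  define Sv where "Sv = N - 3 * int (type_count L T V)"
  have per: "lattice_periodic L T"
    using assms(1) periodic_tiling_iff by blast
  \<comment> \<open>F is additive in y with the jump sums as increments, hence linear; and F l = N (h (x + l) - h x).\<close>
  define F where "F y = (\<Sum>C\<in>cosets L. h (rep C + y) - h (rep C))" for y
  have F_uvec: "F (y + uvec) = F y + Su" for y
  proof -
    have "F (y + uvec) = F y + (\<Sum>C\<in>cosets L. jump T U (rep C + y))"
      unfolding F_def sum.distrib[symmetric] add.assoc[symmetric] height_uvec[OF h]
      by (simp add: algebra_simps)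
    then show ?thesis unfolding sum_cosets_jump[OF per] Su_def N_def .
  qed
  have F_vvec: "F (y + vvec) = F y + Sv" for y
  proof -
    have "F (y + vvec) = F y + (\<Sum>C\<in>cosets L. jump T V (rep C + (y + vvec)))"
      unfolding F_def sum.distrib[symmetric] add.assoc[symmetric] height_vvec[OF h]
      by (simp add: algebra_simps)
    then show ?thesis unfolding sum_cosets_jump[OF per] Sv_def N_def .
  qed
  define G where "G y = F y - (fst y * Su + snd y * Sv)" for y
  have "G l = G 0"
  proof (rule translation_invariant_const)
    show "G (z + uvec) = G z" and "G (z + vvec) = G z" for z
      unfolding G_def F_uvec F_vvec by (simp_all add: uvec_def vvec_def algebra_simps)
  qed
  then have "F l = fst l * Su + snd l * Sv"
    by (simp add: G_def F_def)
  moreover have "F l = N * (h (x + l) - h x)"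
    unfolding F_def N_def using sum.cong[OF refl height_increment_const[OF per h l, where x = x]] by simp
  ultimately show ?thesis unfolding Su_def Sv_def by simp
qed

section \<open>Flips\<close>

lemma add_in_sublattice_iff: "l \<in> L \<Longrightarrow> x + l - y \<in> L \<longleftrightarrow> x - y \<in> L"
  using add_in_sublattice[of "x - y" l] diff_in_sublattice[of "x + l - y" l]
  by (auto simp: algebra_simps)

lemma lattice_periodic_set_conf:
  "lattice_periodic L T \<Longrightarrow> lattice_periodic L (set_conf L T z a b c)"
  unfolding lattice_periodic_def set_conf_def psub_eq padd_eq
  by (simp add: add_in_sublattice_iff)

definition lowered :: "pt \<Rightarrow> (pt \<Rightarrow> int) \<Rightarrow> pt \<Rightarrow> int" where
  "lowered z h x = (if x - z \<in> L then h x - 3 else h x)"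

lemma flip_at_sink:
  assumes per: "lattice_periodic L T" and h: "height T h"
    and sink: "T z = U" "T (z - uvec) = W" "T (z + vvec) = V"
  defines "T' \<equiv> set_conf L T z V U W"
  shows "height T' (lowered z h)" and "periodic_tiling L T'"
    and "flip L T T'" and "flip L T' T"
proof -
  have coset_z: "x - z \<in> L \<Longrightarrow> T x = U"
    and coset_z_u: "x - (z - uvec) \<in> L \<Longrightarrow> T x = W"
    and coset_z_v: "x - (z + vvec) \<in> L \<Longrightarrow> T x = V" for x
    using lattice_periodic_eq[OF per] sink by metis+
  have T': "T' x = (if x - z \<in> L then V else if x - (z - uvec) \<in> L then U
      else if x - (z + vvec) \<in> L then W else T x)" for x
    by (simp add: T'_def set_conf_def)
  have "lowered z h (x + uvec) = lowered z h x + jump T' U x" for x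
  proof -
    have e: "x + uvec - z = x - (z - uvec)" by (simp add: algebra_simps)
    show ?thesis
      unfolding lowered_def e height_uvec[OF h] jump_def T'
      using coset_z[of x] coset_z_u[of x] coset_z_v[of x] by auto
  qed
  moreover have "lowered z h y = lowered z h (y - vvec) + jump T' V y" for y
  proof -
    have e: "y - vvec - z = y - (z + vvec)" by (simp add: algebra_simps)
    show ?thesis
      unfolding lowered_def e height_vvec[OF h, of "y - vvec", simplified] jump_def T'
      using coset_z[of y] coset_z_u[of y] coset_z_v[of y] by auto
  qed
  ultimately show height': "height T' (lowered z h)"
    unfolding height_def by (metis add_diff_cancel)
  show "periodic_tiling L T'"
    unfolding periodic_tiling_iff T'_def
    using lattice_periodic_set_conf[OF per] height_imp_lozenge_tiling[OF height'[unfolded T'_def]]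
    by blast
  show "flip L T T'"
    unfolding flip_def T'_def using sink_configuration_is_sink[OF sink] by blast
  have "is_source T' z"
  proof (rule source_configuration_is_source)
    show "T' z = V" by (simp add: T' zero_in_sublattice)
    show "T' (z - uvec) = U"
      using coset_z[of "z - uvec"] sink(2) by (auto simp: T' zero_in_sublattice)
    show "T' (z + vvec) = W"
      using coset_z[of "z + vvec"] coset_z_u[of "z + vvec"] sink(3) by (auto simp: T' zero_in_sublattice)
  qed
  moreover have "T = set_conf L T' z U W V"
    unfolding set_conf_def psub_eq padd_eq T'
    using coset_z coset_z_u coset_z_v by fastforce
  ultimately show "flip L T' T"
    unfolding flip_def by blast
qed

definition height_distance :: "(pt \<Rightarrow> int) \<Rightarrow> (pt \<Rightarrow> int) \<Rightarrow> nat" where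
  "height_distance h h' = (\<Sum>C\<in>cosets L. nat \<bar>h (rep C) - h' (rep C)\<bar>)"

lemma height_distance_commute: "height_distance h h' = height_distance h' h"
  unfolding height_distance_def by (simp add: abs_minus_commute)

lemma height_distance_lowered_less:
  assumes per: "lattice_periodic L (\<lambda>x. h x - h' x)" and z: "3 \<le> h z - h' z"
  shows "height_distance (lowered z h) h' < height_distance h h'"
  unfolding height_distance_def
proof (rule sum_strict_mono_ex1[OF finite_cosets])
  have on_coset_z: "3 \<le> h x - h' x" if "x - z \<in> L" for x
    using lattice_periodic_eq[OF per that] z by simp
  show "\<forall>C\<in>cosets L. nat \<bar>lowered z h (rep C) - h' (rep C)\<bar> \<le> nat \<bar>h (rep C) - h' (rep C)\<bar>"
  proof
    fix C
    show "nat \<bar>lowered z h (rep C) - h' (rep C)\<bar> \<le> nat \<bar>h (rep C) - h' (rep C)\<bar>"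
      using on_coset_z[of "rep C"] by (auto simp: lowered_def)
  qed
  have "rep (coset z) - z \<in> L"
    using rep_coset diff_in_sublattice_commute by blast
  then have "nat \<bar>lowered z h (rep (coset z)) - h' (rep (coset z))\<bar>
      < nat \<bar>h (rep (coset z)) - h' (rep (coset z))\<bar>"
    using on_coset_z[of "rep (coset z)"] by (auto simp: lowered_def)
  then show "\<exists>C\<in>cosets L. nat \<bar>lowered z h (rep C) - h' (rep C)\<bar> < nat \<bar>h (rep C) - h' (rep C)\<bar>"
    unfolding cosets_eq_range_coset by blast
qed

end

section \<open>Descent\<close>

text \<open>(Su, Sv) / N is the slope of the heights. For tilings of type (g1, g2, g3) we have
  Su = N - 3 g1 and Sv = N - 3 g2, and the three inequalities say that g1, g2, g3 > 0.\<close>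

locale tilted_sublattice = sublattice +
  fixes N Su Sv :: int
  assumes N_pos: "0 < N"
    and slope_interior: "Su < N" "Sv < N" "- Su - Sv < N"
begin

definition has_slope :: "(pt \<Rightarrow> int) \<Rightarrow> bool" where
  "has_slope h \<longleftrightarrow> (\<forall>x. \<forall>l\<in>L. N * (h (x + l) - h x) = fst l * Su + snd l * Sv)"

lemma has_slope_tilted_periodic:
  "has_slope h \<Longrightarrow> lattice_periodic L (\<lambda>x. N * h x - (fst x * Su + snd x * Sv))"
  unfolding has_slope_def lattice_periodic_def by (simp add: algebra_simps)

lemma has_slope_diff_periodic:
  assumes "has_slope h" and "has_slope h'"
  shows "lattice_periodic L (\<lambda>x. h x - h' x)"
  unfolding lattice_periodic_def
proof (intro allI ballI)
  fix x l assume "l \<in> L"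
  then have "N * (h (x + l) - h x) = fst l * Su + snd l * Sv"
    and "N * (h' (x + l) - h' x) = fst l * Su + snd l * Sv"
    using assms unfolding has_slope_def by blast+
  then have "N * ((h (x + l) - h' (x + l)) - (h x - h' x)) = 0"
    by (simp add: algebra_simps)
  then show "h (x + l) - h' (x + l) = h x - h' x"
    using N_pos by simp
qed

lemma has_slope_lowered: "has_slope h \<Longrightarrow> has_slope (lowered z h)"
  unfolding has_slope_def lowered_def by (simp add: add_in_sublattice_iff)

lemma sink_where_height_difference_is_maximal:
  assumes h: "height T h" and h': "height T' h'"
    and slope: "has_slope h" "has_slope h'" and x0: "h x0 > h' x0"
  obtains z where "T z = U" "T (z - uvec) = W" "T (z + vvec) = V" "h z > h' z"
proof -
  define G where "G x = N * h x - (fst x * Su + snd x * Sv)" for x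
  have per: "lattice_periodic L (\<lambda>x. (h x - h' x, G x))"
    using has_slope_diff_periodic[OF slope] has_slope_tilted_periodic[OF slope(1)]
    unfolding lattice_periodic_def G_def by simp
  \<comment> \<open>Lexicographic maximum: first of h - h', then of the tilted height G.\<close>
  obtain z where z: "\<And>x. (h x - h' x, G x) \<le> (h z - h' z, G z)"
    using lattice_periodic_attains_max[OF per] by blast
  have rise: "N \<le> fst (y - z) * Su + snd (y - z) * Sv"
    if "h y = h z + 1" and "h' y \<le> h' z + 1" for y
  proof -
    have "G y \<le> G z" using z[of y] that by auto
    then show ?thesis using that(1) unfolding G_def by (simp add: algebra_simps)
  qed
  have "T z = U"
  proof (rule ccontr)
    assume "T z \<noteq> U"
    then show False
      using rise[of "z + uvec"] slope_interior(1) height_uvec[OF h, of z] height_uvec[OF h', of z]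
        jump_le_1[of T' U z]
      by (simp add: jump_def uvec_def)
  qed
  moreover have "T (z - uvec) = W"
  proof (rule ccontr)
    assume "T (z - uvec) \<noteq> W"
    then show False
      using rise[of "z - uvec - vvec"] slope_interior(3)
        height_W_edge[OF h, of "z - uvec"] height_W_edge[OF h', of "z - uvec"]
        jump_le_1[of T' W "z - uvec"]
      by (simp add: jump_def uvec_def vvec_def)
  qed
  moreover have "T (z + vvec) = V"
  proof (rule ccontr)
    assume "T (z + vvec) \<noteq> V"
    then show False
      using rise[of "z + vvec"] slope_interior(2) height_vvec[OF h, of z] height_vvec[OF h', of z]
        jump_le_1[of T' V "z + vvec"]
      by (simp add: jump_def vvec_def)
  qed
  moreover have "h z > h' z"
    using z[of x0] x0 by auto
  ultimately show ?thesis by (rule that)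
qed

lemma flip_reducing_height_distance:
  assumes T: "periodic_tiling L T" and h: "height T h" and h': "height T' h'"
    and slope: "has_slope h" "has_slope h'"
    and mod_3: "\<forall>x. 3 dvd (h x - h' x)" and x0: "h x0 > h' x0"
  obtains T1 h1 where "flip L T T1" and "flip L T1 T" and "periodic_tiling L T1"
    and "height T1 h1" and "has_slope h1" and "\<forall>x. 3 dvd (h1 x - h' x)"
    and "height_distance h1 h' < height_distance h h'"
proof -
  obtain z where sink: "T z = U" "T (z - uvec) = W" "T (z + vvec) = V" and "h z > h' z"
    using sink_where_height_difference_is_maximal[OF h h' slope x0] by blast
  then have "3 \<le> h z - h' z"
    using mod_3[rule_format, of z] zdvd_imp_le[of 3 "h z - h' z"] by simp
  then have "height_distance (lowered z h) h' < height_distance h h'"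
    using height_distance_lowered_less has_slope_diff_periodic[OF slope] by blast
  moreover have "\<forall>x. 3 dvd (lowered z h x - h' x)"
  proof
    fix x
    show "3 dvd (lowered z h x - h' x)"
      using mod_3[rule_format, of x] unfolding lowered_def by (simp split: if_split; presburger)
  qed
  moreover have "lattice_periodic L T"
    using T unfolding periodic_tiling_iff by blast
  note flip = flip_at_sink[OF this h sink]
  ultimately show ?thesis
    using that[OF flip(3,4,2,1) has_slope_lowered[OF slope(1)]] by blast
qed

lemma flip_connected_if_same_slope:
  assumes "periodic_tiling L T" and "periodic_tiling L T'"
    and "height T h" and "height T' h'" and "has_slope h" and "has_slope h'"
    and "\<forall>x. 3 dvd (h x - h' x)"
  shows "(flip L)\<^sup>*\<^sup>* T T'"
  using assms
proof (induction "height_distance h h'" arbitrary: T h T' h' rule: less_induct)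
  case less
  consider (above) x0 where "h x0 > h' x0" | (below) x0 where "h' x0 > h x0" | (equal) "h = h'"
    by (meson ext linorder_neqE)
  then show ?case
  proof cases
    case above
    obtain T1 h1 where "flip L T T1" and T1: "periodic_tiling L T1" "height T1 h1" "has_slope h1"
      and mod_3: "\<forall>x. 3 dvd (h1 x - h' x)" and closer: "height_distance h1 h' < height_distance h h'"
      using flip_reducing_height_distance[OF less.prems(1,3-7) above] .
    moreover have "(flip L)\<^sup>*\<^sup>* T1 T'"
      using less.hyps[OF closer T1(1) less.prems(2) T1(2) less.prems(4) T1(3) less.prems(6) mod_3] .
    ultimately show ?thesis by (blast intro: converse_rtranclp_into_rtranclp)
  next
    case below
    have "\<forall>x. 3 dvd (h' x - h x)"
      using less.prems(7) by (simp add: dvd_diff_commute)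
    then obtain T1 h1 where "flip L T1 T'" and T1: "periodic_tiling L T1" "height T1 h1" "has_slope h1"
      and mod_3: "\<forall>x. 3 dvd (h1 x - h x)" and closer: "height_distance h1 h < height_distance h' h"
      using flip_reducing_height_distance[OF less.prems(2,4,3,6,5) _ below] by blast
    moreover have "(flip L)\<^sup>*\<^sup>* T T1"
      using less.hyps[OF _ less.prems(1) T1(1) less.prems(3) T1(2) less.prems(5) T1(3)]
        closer mod_3 by (simp add: height_distance_commute dvd_diff_commute)
    ultimately show ?thesis by (blast intro: rtranclp.rtrancl_into_rtrancl)
  next
    case equal
    then show ?thesis
      using height_determines_tiling less.prems(3,4) by blast
  qed
qed

end

theorem theorem6p41:
  fixes L1 :: "pt set" and T1 T2 :: "pt \<Rightarrow> loz" and g1 g2 g3 :: nat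
  assumes "full_rank_sublattice L1"
    and "periodic_tiling L1 T1" and "periodic_tiling L1 T2"
    and "tiling_type L1 T1 = (g1, g2, g3)" and "tiling_type L1 T2 = (g1, g2, g3)"
    and "g1 > 0" and "g2 > 0" and "g3 > 0"
  shows "flip_connected L1 T1 T2"
proof -
  interpret sublattice L1
    using assms(1) by unfold_locales
  define N where "N = int (card (cosets L1))"
  have counts: "type_count L1 T U = g1" "type_count L1 T V = g2" "type_count L1 T W = g3"
    if "tiling_type L1 T = (g1, g2, g3)" for T
    using that unfolding tiling_type_def by simp_all
  have "N = int g1 + int g2 + int g3"
    using card_cosets_eq_type_counts[of T1] assms(2) counts[OF assms(4)]
    unfolding N_def periodic_tiling_iff by simp
  then interpret tilted_sublattice L1 N "N - 3 * int g1" "N - 3 * int g2"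
    by unfold_locales (use assms(6-8) in simp_all)
  obtain h1 h2 where h1: "height T1 h1" "h1 0 = 0" and h2: "height T2 h2" "h2 0 = 0"
    using lozenge_tiling_has_height assms(2,3) unfolding periodic_tiling_iff by metis
  have slope: "has_slope h"
    if "periodic_tiling L1 T" and "tiling_type L1 T = (g1, g2, g3)" and "height T h" for T h
    using height_slope[OF that(1,3)] counts[OF that(2)]
    unfolding has_slope_def N_def[symmetric] by simp
  have "has_slope h1" and "has_slope h2"
    using slope assms(2-5) h1(1) h2(1) by blast+
  moreover have "\<forall>x. 3 dvd (h1 x - h2 x)"
    using height_diff_mod_3[OF h1(1) h2(1)] h1(2) h2(2) by (simp add: dvd_eq_mod_eq_0)
  ultimately show ?thesis
    unfolding flip_connected_def
    using flip_connected_if_same_slope assms(2,3) h1(1) h2(1) by blast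
qed

end
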